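(* Let $U\subset\mathbb{R}^{n+1}$ be a bounded open convex domain with $C^3$ boundary of positive normal curvatures, $o\in U$ the origin, $\omega$ the radial function of $\partial U$, $c=\max_{u\in\mathbb{S}^n}\frac{\omega(u)}{\omega(-u)}$, and let $\Phi:\mathbb{S}^n\times\mathbb{R}_{\ge0}\to U$, $\Phi(u,s)=\tanh(s)\,\omega(u)\,u$. Put $d_1=-\frac12\ln\big[\frac12(1+\frac1c)\big]$ and $d_2=-\frac12\ln\big[\frac12(1+c)\big]$. Then for every $d\ge d_1$ there is $\rho_0$ such that $B_\rho^{n+1}\subseteq\Phi(\mathbb{S}^n\times[0,\rho+d])$ for all $\rho\ge\rho_0$, and for every $d\le d_2$ there is $\rho_0$ such that $\Phi(\mathbb{S}^n\times[0,\rho+d])\subseteq B_\rho^{n+1}$ for all $\rho\ge\rho_0$. In particular, for $\rho$ large, $\mathbf{Vol}(\Phi(\mathbb{S}^n\times[0,\rho+d_2]))\le\mathbf{Vol}(B_\rho^{n+1})\le\mathbf{Vol}(\Phi(\mathbb{S}^n\times[0,\rho+d_1]))$; if $U$ is centrally symmetric about $o$ then $d_1=d_2=0$.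
   Context: $B_\rho^{n+1}$ is the closed metric ball of radius $\rho$ centered at $o$ for the Hilbert distance $d_U(p,q)=\frac12\ln\big(\frac{\|q-q_1\|}{\|q-p_1\|}\cdot\frac{\|p-p_1\|}{\|p-q_1\|}\big)$, where $p_1,q_1$ are the intersection points with $\partial U$ of the half-lines $p+\mathbb{R}_{-}(q-p)$, $p+\mathbb{R}_{+}(q-p)$. The radial function $\omega:\mathbb{S}^n\to\mathbb{R}_+$ is such that $u\mapsto\omega(u)u$ parametrizes $\partial U$. $\mathbf{Vol}$ is the Busemann–Hausdorff volume of $(U,F_U)$, i.e. $\int\sigma(p)\,dp$ with $\sigma(p)=\mathbf{Vol}_E(\mathbb{B}^{n+1})/\mathbf{Vol}_E(\{v:F_U(p,v)<1\})$, $F_U(p,v)=\frac12\|v\|\big(\frac1{\|p-p_-\|}+\frac1{\|p-p_+\|}\big)$, $p_\mp$ the intersection points of $p+\mathbb{R}_\mp v$ with $\partial U$. *)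

theory Defs
  imports "HOL-Analysis.Analysis"
begin

text \<open>Bounded open convex domain U with C^3 boundary of positive normal curvatures:
  there is an open neighbourhood N of the boundary and a C^3 defining function f on N
  (gradient G, Hessian H, third derivative T continuous), U \<inter> N = {f < 0}, f = 0 and
  G \<noteq> 0 on the boundary, and the Hessian is positive definite on tangent vectors
  (the second fundamental form w.r.t. the outer normal G/|G| is positive definite).\<close>
definition C3_pos_curv_boundary :: "'a::euclidean_space set \<Rightarrow> bool" where
  "C3_pos_curv_boundary U \<longleftrightarrow>
     (\<exists>N (f::'a \<Rightarrow> real) (G::'a \<Rightarrow> 'a) (H::'a \<Rightarrow> ('a \<Rightarrow>\<^sub>L 'a))
        (T::'a \<Rightarrow> ('a \<Rightarrow>\<^sub>L ('a \<Rightarrow>\<^sub>L 'a))).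
        open N \<and> frontier U \<subseteq> N \<and>
        (\<forall>x\<in>N. (f has_derivative (\<lambda>v. G x \<bullet> v)) (at x)) \<and>
        (\<forall>x\<in>N. (G has_derivative blinfun_apply (H x)) (at x)) \<and>
        (\<forall>x\<in>N. (H has_derivative blinfun_apply (T x)) (at x)) \<and>
        continuous_on N T \<and>
        (\<forall>x\<in>N. x \<in> U \<longleftrightarrow> f x < 0) \<and>
        (\<forall>x\<in>frontier U. f x = 0 \<and> G x \<noteq> 0) \<and>
        (\<forall>x\<in>frontier U. \<forall>v. v \<noteq> 0 \<and> G x \<bullet> v = 0 \<longrightarrow> blinfun_apply (H x) v \<bullet> v > 0))"

text \<open>Parameter t > 0 with p + t v on the boundary of U (unique for p in a bounded open
  convex U and v \<noteq> 0).\<close>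
definition exit_param :: "'a::euclidean_space set \<Rightarrow> 'a \<Rightarrow> 'a \<Rightarrow> real" where
  "exit_param U p v = (THE t. t > 0 \<and> p + t *\<^sub>R v \<in> frontier U)"

definition bdry_point :: "'a::euclidean_space set \<Rightarrow> 'a \<Rightarrow> 'a \<Rightarrow> 'a" where
  "bdry_point U p v = p + exit_param U p v *\<^sub>R v"

definition hilbert_dist :: "'a::euclidean_space set \<Rightarrow> 'a \<Rightarrow> 'a \<Rightarrow> real" where
  "hilbert_dist U p q =
     (if p = q then 0 else
       (let p1 = bdry_point U p (p - q); q1 = bdry_point U p (q - p) in
         1/2 * ln ((norm (p - q1) / norm (p - p1)) * (norm (q - p1) / norm (q - q1)))))"

definition hball :: "'a::euclidean_space set \<Rightarrow> real \<Rightarrow> 'a set" where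
  "hball U \<rho> = {p \<in> U. hilbert_dist U 0 p \<le> \<rho>}"

definition radial :: "'a::euclidean_space set \<Rightarrow> 'a \<Rightarrow> real" where
  "radial U u = exit_param U 0 u"

definition PhiMap :: "'a::euclidean_space set \<Rightarrow> 'a \<Rightarrow> real \<Rightarrow> 'a" where
  "PhiMap U u s = (tanh s * radial U u) *\<^sub>R u"

definition PhiImage :: "'a::euclidean_space set \<Rightarrow> real \<Rightarrow> 'a set" where
  "PhiImage U r = {PhiMap U u s | u s. u \<in> sphere 0 1 \<and> 0 \<le> s \<and> s \<le> r}"

definition finsler_U :: "'a::euclidean_space set \<Rightarrow> 'a \<Rightarrow> 'a \<Rightarrow> real" where
  "finsler_U U p v = (if v = 0 then 0 else
      1/2 * norm v * (1 / norm (p - bdry_point U p (- v)) + 1 / norm (p - bdry_point U p v)))"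

definition BH_density :: "'a::euclidean_space set \<Rightarrow> 'a \<Rightarrow> real" where
  "BH_density U p = measure lebesgue (ball (0::'a) 1) / measure lebesgue {v. finsler_U U p v < 1}"

definition BH_vol :: "'a::euclidean_space set \<Rightarrow> 'a set \<Rightarrow> real" where
  "BH_vol U A = (LINT p:A|lebesgue. BH_density U p)"

end

theory Submission
  imports Defs
begin

text \<open>
  Everything is expressed through the Minkowski functional (gauge) g of U with respect
  to the origin, g(p) = 1 / (exit parameter of the ray from 0 through p).  Then
  U = {g < 1}, the radial function is omega = 1/g on the sphere, and
  (1) Phi(S^n x [0,R]) = {g <= tanh R};
  (2) d_U(o, q) = artanh g(q) + 1/2 ln ((1 + g(-q)) / (1 + g(q))).
  If c bounds omega(u)/omega(-u) on the sphere, then g(-q) lies between g(q)/c and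
  c g(q), and elementary inequalities bound the correction term in (2) between -d1
  and -d2.  Both inclusions follow for every radius rho.  For the volume estimate the
  Busemann--Hausdorff density is shown to be bounded (hence integrable) on each gauge
  sublevel set {g <= T}, T < 1, so the volume is monotone there.  A centrally symmetric
  U has omega(u) = omega(-u), hence c = 1 and d1 = d2 = 0.

  Only boundedness, openness and convexity of U and the position of the origin enter
  the argument.
\<close>

lemma tanh_artanh_real:
  fixes x :: real
  assumes "-1 < x" "x < 1"
  shows "tanh (artanh x) = x"
proof -
  have e: "exp (- 2 * artanh x) = (1 - x) / (1 + x)"
  proof -
    have "- 2 * artanh x = ln ((1 - x) / (1 + x))"
      using assms by (simp add: artanh_def ln_div)
    thus ?thesis using assms by simp
  qed
  show ?thesis unfolding tanh_real_altdef e using assms by (simp add: field_simps)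
qed

lemma artanh_le_iff:
  fixes g R :: real
  assumes "-1 < g" "g < 1"
  shows "artanh g \<le> R \<longleftrightarrow> g \<le> tanh R"
  using tanh_real_le_iff[of "artanh g" R] tanh_artanh_real[OF assms] by simp

text \<open>The Hilbert distance from the centre splits into the "symmetric part" artanh g and
  a correction term measuring the asymmetry of U along the line through the point.\<close>
lemma ln_quotient_split_artanh:
  fixes g x :: real
  assumes "-1 < g" "g < 1" "-1 < x"
  shows "ln ((1 + x) / (1 - g)) / 2 = artanh g + ln ((1 + x) / (1 + g)) / 2"
proof -
  have "ln ((1 + x) / (1 - g)) = ln (((1 + g) / (1 - g)) * ((1 + x) / (1 + g)))"
    using assms by simp
  also have "\<dots> = ln ((1 + g) / (1 - g)) + ln ((1 + x) / (1 + g))"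
    using assms by (intro ln_mult_pos) auto
  finally show ?thesis by (simp add: artanh_def)
qed

text \<open>Lower bound for the correction term when the opposite gauge value is at least m g;
  this produces the constant d1.\<close>
lemma asymmetry_excess_lower:
  fixes g x m :: real
  assumes "0 \<le> g" "g < 1" "0 < m" "m \<le> 1" "m * g \<le> x"
  shows "ln (1/2 * (1 + m)) \<le> ln ((1 + x) / (1 + g))"
proof -
  have "0 \<le> (1 - m) * (1 - g)" using assms by simp
  hence "(1 + m) * (1 + g) \<le> 2 * (1 + x)" using assms by (simp add: algebra_simps)
  hence "1/2 * (1 + m) \<le> (1 + x) / (1 + g)" using assms by (simp add: field_simps)
  moreover have "0 \<le> x" using mult_nonneg_nonneg[of m g] assms by linarith
  ultimately show ?thesis using assms by (subst ln_le_cancel_iff) auto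
qed

text \<open>Upper bound for the correction term when the opposite gauge value is at most c g;
  this produces the constant d2.\<close>
lemma asymmetry_excess_upper:
  fixes g x c :: real
  assumes "0 \<le> g" "g \<le> 1" "0 \<le> x" "x \<le> c * g" "1 \<le> c"
  shows "ln ((1 + x) / (1 + g)) \<le> ln (1/2 * (1 + c))"
proof -
  have "0 \<le> (c - 1) * (1 - g)" using assms by simp
  hence "2 * (1 + x) \<le> (1 + c) * (1 + g)" using assms by (simp add: algebra_simps)
  hence "(1 + x) / (1 + g) \<le> 1/2 * (1 + c)" using assms by (simp add: field_simps)
  thus ?thesis using assms by (subst ln_le_cancel_iff) auto
qed

lemma threshold_unique:
  fixes x y :: real
  assumes "x > 0" "y > 0" "\<And>s. s \<ge> 0 \<Longrightarrow> s < x \<longleftrightarrow> s < y"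
  shows "x = y"
  using assms(3)[of "(x + y) / 2"] assms(1,2) by (cases x y rule: linorder_cases) auto

text \<open>Open version of the condition 1/a + 1/b < 2 defining the Finsler unit ball.\<close>
lemma reciprocal_sum_below_iff:
  fixes a b :: real
  assumes "a > 0" "b > 0"
  shows "(\<exists>\<alpha>>0. \<exists>\<beta>>0. \<alpha> < a \<and> \<beta> < b \<and> 1/\<alpha> + 1/\<beta> < 2) \<longleftrightarrow> 1/a + 1/b < 2"
proof
  assume "\<exists>\<alpha>>0. \<exists>\<beta>>0. \<alpha> < a \<and> \<beta> < b \<and> 1/\<alpha> + 1/\<beta> < 2"
  then obtain \<alpha> \<beta> where h: "\<alpha> > 0" "\<beta> > 0" "\<alpha> < a" "\<beta> < b" "1/\<alpha> + 1/\<beta> < 2" by blast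
  have "1/a < 1/\<alpha>" "1/b < 1/\<beta>" using h by (auto intro: divide_strict_left_mono)
  thus "1/a + 1/b < 2" using h by linarith
next
  assume h: "1/a + 1/b < 2"
  define S where "S = 1/a + 1/b"
  define r where "r = (S / 2 + 1) / 2"
  have "0 < S" using assms by (simp add: S_def add_pos_pos)
  hence r: "0 < r" "r < 1" "S / 2 < r" using h unfolding r_def S_def[symmetric] by simp_all
  have "1/(r * a) + 1/(r * b) = S / r" using r by (simp add: S_def field_simps)
  also have "\<dots> < 2" using r by (simp add: field_simps)
  finally have "1/(r * a) + 1/(r * b) < 2" .
  moreover have "0 < r * a" "r * a < a" "0 < r * b" "r * b < b" using r assms by simp_all
  ultimately show "\<exists>\<alpha>>0. \<exists>\<beta>>0. \<alpha> < a \<and> \<beta> < b \<and> 1/\<alpha> + 1/\<beta> < 2" by blast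
qed

definition minkowski_gauge :: "'a::euclidean_space set \<Rightarrow> 'a \<Rightarrow> real" where
  "minkowski_gauge U p = (if p = 0 then 0 else 1 / exit_param U 0 p)"

locale convex_domain =
  fixes U :: "'a::euclidean_space set"
  assumes domain_bounded: "bounded U" and domain_open: "open U" and domain_convex: "convex U"
begin

lemma ray_leaves_domain:
  assumes "v \<noteq> 0"
  shows "\<exists>s\<ge>0. p + s *\<^sub>R v \<notin> U"
proof -
  obtain B where B: "\<forall>x\<in>U. norm x \<le> B" using domain_bounded bounded_iff by auto
  define s where "s = (\<bar>B\<bar> + norm p + 1) / norm v"
  have "norm (s *\<^sub>R v) = \<bar>B\<bar> + norm p + 1" using assms by (simp add: s_def)
  moreover have "norm (s *\<^sub>R v) \<le> norm (p + s *\<^sub>R v) + norm p"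
    by (metis add_diff_cancel_left' norm_triangle_ineq4 add.commute)
  ultimately have "p + s *\<^sub>R v \<notin> U" using B by force
  moreover have "s \<ge> 0" by (simp add: s_def)
  ultimately show ?thesis by blast
qed

text \<open>By connectedness every ray from a point of U meets the boundary.\<close>
lemma ray_hits_frontier:
  assumes p: "p \<in> U" and v: "v \<noteq> 0"
  shows "\<exists>t>0. p + t *\<^sub>R v \<in> frontier U"
proof -
  define R where "R = (\<lambda>s. p + s *\<^sub>R v) ` {0..}"
  have "connected R" unfolding R_def by (intro connected_continuous_image continuous_intros) auto
  moreover have "R \<inter> U \<noteq> {}" using p by (auto simp: R_def intro!: image_eqI[where x=0])
  moreover have "R - U \<noteq> {}" using ray_leaves_domain[OF v, of p] by (auto simp: R_def)
  ultimately obtain x where x: "x \<in> R" "x \<in> frontier U" using connected_Int_frontier by blast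
  then obtain t where t: "t \<ge> 0" "x = p + t *\<^sub>R v" unfolding R_def by auto
  have "x \<notin> U" using x(2) domain_open frontier_disjoint_eq by blast
  hence "t > 0" using p t by (cases "t = 0") auto
  thus ?thesis using t x by blast
qed

text \<open>By convexity a ray from a point of U lies in U exactly before it first meets the boundary.\<close>
lemma ray_in_domain_iff:
  assumes p: "p \<in> U" and t: "t > 0" and x: "p + t *\<^sub>R v \<in> frontier U" and s: "s \<ge> 0"
  shows "p + s *\<^sub>R v \<in> U \<longleftrightarrow> s < t"
proof
  have x_out: "p + t *\<^sub>R v \<notin> U" and x_cl: "p + t *\<^sub>R v \<in> closure U"
    using x domain_open by (auto simp: frontier_def interior_open)
  {
    assume s_in: "p + s *\<^sub>R v \<in> U"
    show "s < t"
    proof (rule ccontr)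
      assume "\<not> s < t"
      hence w: "0 < t / s" "t / s \<le> 1" "s \<noteq> 0" using t by auto
      have "(1 - t / s) *\<^sub>R p + (t / s) *\<^sub>R (p + s *\<^sub>R v) \<in> U"
        using convexD[OF domain_convex p s_in] w by auto
      moreover have "(1 - t / s) *\<^sub>R p + (t / s) *\<^sub>R (p + s *\<^sub>R v) = p + t *\<^sub>R v"
        using w by (simp add: algebra_simps)
      ultimately show False using x_out by simp
    qed
  }
  assume "s < t"
  show "p + s *\<^sub>R v \<in> U"
  proof (cases "s = 0")
    case True
    thus ?thesis using p by simp
  next
    case False
    have "p \<noteq> p + t *\<^sub>R v" using p x_out by auto
    moreover have "p + s *\<^sub>R v = (1 - s / t) *\<^sub>R p + (s / t) *\<^sub>R (p + t *\<^sub>R v)"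
      using t by (simp add: algebra_simps)
    ultimately have "p + s *\<^sub>R v \<in> open_segment p (p + t *\<^sub>R v)"
      unfolding in_segment using \<open>s < t\<close> False s t
      by (intro conjI exI[where x="s / t"]) (auto simp: field_simps)
    thus ?thesis
      using in_interior_closure_convex_segment[OF domain_convex _ x_cl] p
        interior_open[OF domain_open] by auto
  qed
qed

lemma exit_param:
  assumes p: "p \<in> U" and v: "v \<noteq> 0"
  shows "exit_param U p v > 0"
    and "\<And>s. s \<ge> 0 \<Longrightarrow> p + s *\<^sub>R v \<in> U \<longleftrightarrow> s < exit_param U p v"
proof -
  obtain t where t: "t > 0" "p + t *\<^sub>R v \<in> frontier U" using ray_hits_frontier[OF p v] by blast
  have "exit_param U p v = t" unfolding exit_param_def
  proof (rule the_equality)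
    fix t' assume t': "t' > 0 \<and> p + t' *\<^sub>R v \<in> frontier U"
    show "t' = t"
    proof (rule threshold_unique)
      fix s :: real assume "s \<ge> 0"
      thus "s < t' \<longleftrightarrow> s < t"
        using ray_in_domain_iff[OF p, of t' v s] ray_in_domain_iff[OF p t, of s] t' by simp
    qed (use t t' in auto)
  qed (use t in auto)
  thus "exit_param U p v > 0" "\<And>s. s \<ge> 0 \<Longrightarrow> p + s *\<^sub>R v \<in> U \<longleftrightarrow> s < exit_param U p v"
    using t ray_in_domain_iff[OF p t] by auto
qed

lemma exit_param_eqI:
  assumes p: "p \<in> U" and t: "t > 0" and ray: "\<And>s. s \<ge> 0 \<Longrightarrow> p + s *\<^sub>R v \<in> U \<longleftrightarrow> s < t"
  shows "exit_param U p v = t"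
proof -
  have "v \<noteq> 0" using ray[of t] p t by auto
  thus ?thesis using exit_param[OF p] t ray by (intro threshold_unique) auto
qed

lemma exit_param_scale:
  assumes p: "p \<in> U" and v: "v \<noteq> 0" and a: "a > 0"
  shows "exit_param U p (a *\<^sub>R v) = exit_param U p v / a"
proof (rule exit_param_eqI[OF p])
  show "exit_param U p v / a > 0" using exit_param(1)[OF p v] a by simp
  fix s :: real assume "s \<ge> 0"
  thus "p + s *\<^sub>R a *\<^sub>R v \<in> U \<longleftrightarrow> s < exit_param U p v / a"
    using exit_param(2)[OF p v, of "s * a"] a by (simp add: field_simps)
qed

end

locale convex_domain_origin = convex_domain +
  assumes origin_in_domain: "0 \<in> U"
begin

lemma gauge_pos: "p \<noteq> 0 \<Longrightarrow> minkowski_gauge U p > 0"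
  using exit_param(1)[OF origin_in_domain] by (simp add: minkowski_gauge_def)

lemma gauge_nonneg: "minkowski_gauge U p \<ge> 0"
  using gauge_pos by (cases "p = 0") (auto simp: minkowski_gauge_def intro: less_imp_le)

lemma gauge_scale: "a \<ge> 0 \<Longrightarrow> minkowski_gauge U (a *\<^sub>R p) = a * minkowski_gauge U p"
  using exit_param_scale[OF origin_in_domain, of p a]
  by (cases "a = 0") (auto simp: minkowski_gauge_def)

lemma gauge_less_iff:
  assumes a: "a > 0"
  shows "minkowski_gauge U p < a \<longleftrightarrow> (1 / a) *\<^sub>R p \<in> U"
proof (cases "p = 0")
  case True
  thus ?thesis using a origin_in_domain by (simp add: minkowski_gauge_def)
next
  case False
  have E: "exit_param U 0 p > 0" using exit_param(1)[OF origin_in_domain False] .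
  have "(1 / a) *\<^sub>R p \<in> U \<longleftrightarrow> 1 / a < exit_param U 0 p"
    using exit_param(2)[OF origin_in_domain False, of "1 / a"] a by simp
  also have "\<dots> \<longleftrightarrow> minkowski_gauge U p < a"
    using E a False by (simp add: minkowski_gauge_def field_simps)
  finally show ?thesis by simp
qed

lemma gauge_less_1: "p \<in> U \<longleftrightarrow> minkowski_gauge U p < 1"
  using gauge_less_iff[of 1] by simp

text \<open>The gauge is Borel measurable, its strict sublevel sets being open.\<close>
lemma gauge_measurable: "minkowski_gauge U \<in> borel_measurable borel"
proof (rule borel_measurableI_less)
  fix y :: real
  show "{x \<in> space borel. minkowski_gauge U x < y} \<in> sets borel"
  proof (cases "y > 0")
    case True
    have "{x \<in> space borel. minkowski_gauge U x < y} = (\<lambda>x. (1 / y) *\<^sub>R x) -` U"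
      using gauge_less_iff[OF True] by auto
    moreover have "open ((\<lambda>x. (1 / y) *\<^sub>R x) -` U)"
      by (intro continuous_open_vimage domain_open continuous_intros)
    ultimately show ?thesis by auto
  next
    case False
    hence "{x \<in> space borel. minkowski_gauge U x < y} = {}"
      using gauge_nonneg by (auto simp: not_less intro: order_trans)
    thus ?thesis by simp
  qed
qed

lemma radial_eq: "u \<noteq> 0 \<Longrightarrow> radial U u = 1 / minkowski_gauge U u"
  by (simp add: radial_def minkowski_gauge_def)

lemma hilbert_dist_origin:
  assumes q: "q \<in> U"
  shows "hilbert_dist U 0 q
           = artanh (minkowski_gauge U q)
             + ln ((1 + minkowski_gauge U (- q)) / (1 + minkowski_gauge U q)) / 2"
proof (cases "q = 0")
  case True
  thus ?thesis by (simp add: hilbert_dist_def minkowski_gauge_def)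
next
  case False
  define E where "E = exit_param U 0 q"
  define E' where "E' = exit_param U 0 (- q)"
  have E: "E > 0" "E' > 0"
    using exit_param(1)[OF origin_in_domain] False by (auto simp: E_def E'_def)
  have g: "minkowski_gauge U q = 1 / E" "minkowski_gauge U (- q) = 1 / E'"
    using False by (simp_all add: minkowski_gauge_def E_def E'_def)
  have E1: "E > 1" using gauge_less_1 q E g by (simp add: field_simps)
  have nq: "norm q > 0" using False by simp
  have a: "norm (0 - bdry_point U 0 (q - 0)) = E * norm q"
    using E by (simp add: bdry_point_def E_def)
  have b: "norm (0 - bdry_point U 0 (0 - q)) = E' * norm q"
    using E by (simp add: bdry_point_def E'_def)
  have "q - bdry_point U 0 (0 - q) = (1 + E') *\<^sub>R q"
    by (simp add: bdry_point_def E'_def algebra_simps)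
  hence c: "norm (q - bdry_point U 0 (0 - q)) = (1 + E') * norm q" using E by simp
  have "q - bdry_point U 0 (q - 0) = (1 - E) *\<^sub>R q"
    by (simp add: bdry_point_def E_def algebra_simps)
  hence d: "norm (q - bdry_point U 0 (q - 0)) = (E - 1) * norm q" using E1 by simp
  have "hilbert_dist U 0 q
      = ln ((E * norm q / (E' * norm q)) * ((1 + E') * norm q / ((E - 1) * norm q))) / 2"
    unfolding hilbert_dist_def Let_def using False a b c d by (simp del: diff_0 diff_0_right)
  also have "(E * norm q / (E' * norm q)) * ((1 + E') * norm q / ((E - 1) * norm q))
      = (1 + minkowski_gauge U (- q)) / (1 - minkowski_gauge U q)"
    using E E1 nq unfolding g by (simp add: field_simps)
  also have "ln \<dots> / 2 = artanh (minkowski_gauge U q)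
             + ln ((1 + minkowski_gauge U (- q)) / (1 + minkowski_gauge U q)) / 2"
    using q gauge_less_1 gauge_nonneg[of q] gauge_nonneg[of "- q"]
    by (intro ln_quotient_split_artanh) auto
  finally show ?thesis .
qed

lemma gauge_PhiMap:
  assumes u: "norm u = 1" and s: "s \<ge> 0"
  shows "minkowski_gauge U (PhiMap U u s) = tanh s"
proof -
  have "u \<noteq> 0" using u by auto
  hence "PhiMap U u s = (tanh s / minkowski_gauge U u) *\<^sub>R u"
    by (simp add: PhiMap_def radial_eq)
  thus ?thesis using gauge_scale[of "tanh s / minkowski_gauge U u" u] gauge_pos[OF \<open>u \<noteq> 0\<close>] s
    by simp
qed

lemma PhiImage_gauge: "PhiImage U R = {p. minkowski_gauge U p \<le> tanh R}"
proof (intro set_eqI iffI)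
  fix p assume "p \<in> PhiImage U R"
  then obtain u s where "norm u = 1" "0 \<le> s" "s \<le> R" "p = PhiMap U u s"
    unfolding PhiImage_def by auto
  thus "p \<in> {p. minkowski_gauge U p \<le> tanh R}" using gauge_PhiMap by simp
next
  fix p assume p: "p \<in> {p. minkowski_gauge U p \<le> tanh R}"
  show "p \<in> PhiImage U R"
  proof (cases "p = 0")
    case True
    obtain b :: 'a where "b \<in> Basis" using nonempty_Basis by blast
    hence "norm b = 1" by simp
    moreover have "0 \<le> R" using p True by (simp add: minkowski_gauge_def)
    ultimately have "PhiMap U b 0 \<in> PhiImage U R" unfolding PhiImage_def by fastforce
    thus ?thesis using True by (simp add: PhiMap_def)
  next
    case False
    define g where "g = minkowski_gauge U p"
    define u where "u = (1 / norm p) *\<^sub>R p"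
    have g: "0 < g" "g < 1"
      using gauge_pos[OF False] p tanh_real_lt_1[of R] by (auto simp: g_def)
    have u: "norm u = 1" "u \<noteq> 0" using False by (auto simp: u_def)
    have "tanh (artanh g) = g" using g by (intro tanh_artanh_real) auto
    hence "PhiMap U u (artanh g) = (g / minkowski_gauge U u) *\<^sub>R u"
      by (simp add: PhiMap_def radial_eq[OF u(2)])
    also have "\<dots> = p"
      using gauge_scale[of "1 / norm p" p] False g by (simp add: u_def g_def)
    finally have "PhiMap U u (artanh g) = p" .
    moreover have "0 \<le> artanh g" "artanh g \<le> R"
      using artanh_le_iff[of g 0] artanh_le_iff[of g R] g p by (auto simp: g_def)
    ultimately show ?thesis using u(1) unfolding PhiImage_def by fastforce
  qed
qed

lemma hball_gauge:
  "hball U \<rho> = {p. minkowski_gauge U p < 1 \<and>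
      artanh (minkowski_gauge U p)
      + ln ((1 + minkowski_gauge U (- p)) / (1 + minkowski_gauge U p)) / 2 \<le> \<rho>}"
proof (intro set_eqI)
  fix p :: 'a
  show "p \<in> hball U \<rho> \<longleftrightarrow> p \<in> {p. minkowski_gauge U p < 1 \<and>
      artanh (minkowski_gauge U p)
      + ln ((1 + minkowski_gauge U (- p)) / (1 + minkowski_gauge U p)) / 2 \<le> \<rho>}"
    using hilbert_dist_origin[of p] gauge_less_1[of p] by (cases "p \<in> U") (simp_all add: hball_def)
qed

lemma hball_measurable: "hball U \<rho> \<in> sets lebesgue"
proof -
  note [measurable] = gauge_measurable
  have [measurable]: "(\<lambda>p. minkowski_gauge U (- p)) \<in> borel_measurable borel" by measurable
  have "hball U \<rho> \<in> sets borel" unfolding hball_gauge artanh_def by measurable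
  thus ?thesis by simp
qed

lemma PhiImage_measurable: "PhiImage U R \<in> sets lebesgue"
proof -
  note [measurable] = gauge_measurable
  have "PhiImage U R \<in> sets borel" unfolding PhiImage_gauge by measurable
  thus ?thesis by simp
qed

lemma gauge_neg_le:
  assumes c_bound: "\<forall>u\<in>sphere 0 1. radial U u / radial U (- u) \<le> c"
  shows "minkowski_gauge U (- p) \<le> c * minkowski_gauge U p"
proof (cases "p = 0")
  case True
  thus ?thesis by (simp add: minkowski_gauge_def)
next
  case False
  define u where "u = (1 / norm p) *\<^sub>R p"
  have u: "u \<in> sphere 0 1" "u \<noteq> 0" "- u \<noteq> 0" using False by (auto simp: u_def)
  have p: "norm p *\<^sub>R u = p" "norm p *\<^sub>R (- u) = - p" using False by (simp_all add: u_def)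
  have "radial U u / radial U (- u) \<le> c" using c_bound u(1) by blast
  hence "minkowski_gauge U (- u) / minkowski_gauge U u \<le> c" using u by (simp add: radial_eq)
  hence "minkowski_gauge U (- u) \<le> c * minkowski_gauge U u"
    using gauge_pos[OF u(2)] by (simp add: field_simps)
  hence "norm p * minkowski_gauge U (- u) \<le> norm p * (c * minkowski_gauge U u)"
    by (rule mult_left_mono) simp
  thus ?thesis
    using gauge_scale[of "norm p" u] gauge_scale[of "norm p" "- u"] p by (simp add: ac_simps)
qed

text \<open>Such a bound is at least 1, since the ratio at -u is the inverse of the ratio at u.\<close>
lemma asymmetry_bound_ge_1:
  assumes c_bound: "\<forall>u\<in>sphere 0 1. radial U u / radial U (- u) \<le> c"
  shows "1 \<le> c"
proof (rule ccontr)
  assume "\<not> 1 \<le> c"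
  obtain b :: 'a where "b \<in> Basis" using nonempty_Basis by blast
  hence "b \<noteq> 0" by auto
  define x y where "x = minkowski_gauge U b" and "y = minkowski_gauge U (- b)"
  have pos: "0 < x" "0 < y" using gauge_pos \<open>b \<noteq> 0\<close> by (auto simp: x_def y_def)
  have le: "y \<le> c * x" "x \<le> c * y"
    using gauge_neg_le[OF c_bound, of b] gauge_neg_le[OF c_bound, of "- b"] by (auto simp: x_def y_def)
  hence "0 < c * x" using pos by linarith
  hence "0 < c" using pos by (simp add: zero_less_mult_iff)
  hence "c * x < x" "c * y < y" using pos \<open>\<not> 1 \<le> c\<close> by simp_all
  thus False using le by linarith
qed

text \<open>The radial ratio is bounded on the sphere, so the constant c of the theorem is finite.\<close>
lemma radial_ratio_bdd_above: "bdd_above ((\<lambda>u. radial U u / radial U (- u)) ` sphere 0 1)"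
proof -
  obtain \<delta> where \<delta>: "\<delta> > 0" "ball 0 \<delta> \<subseteq> U" using domain_open origin_in_domain open_contains_ball by blast
  obtain B where B: "\<forall>x\<in>U. norm x \<le> B" using domain_bounded bounded_iff by auto
  have upper: "minkowski_gauge U u < 2 / \<delta>" if "norm u = 1" for u :: 'a
    using \<delta> that by (subst gauge_less_iff) auto
  have lower: "1 / (\<bar>B\<bar> + 1) \<le> minkowski_gauge U u" if "norm u = 1" for u :: 'a
  proof (rule ccontr)
    assume "\<not> ?thesis"
    hence "(\<bar>B\<bar> + 1) *\<^sub>R u \<in> U" using gauge_less_iff[of "1 / (\<bar>B\<bar> + 1)" u] by simp
    thus False using B that by fastforce
  qed
  show ?thesis
  proof (rule bdd_aboveI2)
    fix u :: 'a assume "u \<in> sphere 0 1"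
    hence u: "norm u = 1" "u \<noteq> 0" "- u \<noteq> 0" by auto
    have "minkowski_gauge U (- u) / minkowski_gauge U u \<le> (2 / \<delta>) / (1 / (\<bar>B\<bar> + 1))"
      using \<delta>(1) upper[of "- u"] lower[of u] u gauge_nonneg[of "- u"] by (intro frac_le) auto
    thus "radial U u / radial U (- u) \<le> 2 / \<delta> * (\<bar>B\<bar> + 1)" using u by (simp add: radial_eq)
  qed
qed

lemma radial_ratio_symmetric:
  assumes sym: "\<forall>x. x \<in> U \<longleftrightarrow> - x \<in> U" and u: "u \<noteq> 0"
  shows "radial U u / radial U (- u) = 1"
proof -
  have "exit_param U 0 (- u) = exit_param U 0 u"
    using exit_param[OF origin_in_domain u] sym by (intro exit_param_eqI[OF origin_in_domain]) auto
  thus ?thesis using exit_param(1)[OF origin_in_domain u] by (simp add: radial_def)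
qed

lemma hball_subset_PhiImage:
  assumes c_bound: "\<forall>u\<in>sphere 0 1. radial U u / radial U (- u) \<le> c"
    and d: "d \<ge> - 1/2 * ln (1/2 * (1 + 1 / c))"
  shows "hball U \<rho> \<subseteq> PhiImage U (\<rho> + d)"
proof
  fix p assume "p \<in> hball U \<rho>"
  hence p: "p \<in> U" "hilbert_dist U 0 p \<le> \<rho>" by (auto simp: hball_def)
  define g where "g = minkowski_gauge U p"
  have g: "0 \<le> g" "g < 1" using gauge_nonneg gauge_less_1 p by (auto simp: g_def)
  have c: "1 \<le> c" using asymmetry_bound_ge_1[OF c_bound] .
  have "g \<le> c * minkowski_gauge U (- p)" using gauge_neg_le[OF c_bound, of "- p"] by (simp add: g_def)
  hence "1 / c * g \<le> minkowski_gauge U (- p)" using c by (simp add: field_simps)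
  hence "ln (1/2 * (1 + 1 / c)) \<le> ln ((1 + minkowski_gauge U (- p)) / (1 + g))"
    using g c by (intro asymmetry_excess_lower) auto
  hence "artanh g \<le> hilbert_dist U 0 p + d" using hilbert_dist_origin[OF p(1)] d by (simp add: g_def)
  hence "artanh g \<le> \<rho> + d" using p(2) by linarith
  hence "g \<le> tanh (\<rho> + d)" using artanh_le_iff g by simp
  thus "p \<in> PhiImage U (\<rho> + d)" by (simp add: PhiImage_gauge g_def)
qed

lemma PhiImage_subset_hball:
  assumes c_bound: "\<forall>u\<in>sphere 0 1. radial U u / radial U (- u) \<le> c"
    and d: "d \<le> - 1/2 * ln (1/2 * (1 + c))"
  shows "PhiImage U (\<rho> + d) \<subseteq> hball U \<rho>"
proof
  fix p assume "p \<in> PhiImage U (\<rho> + d)"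
  hence g_le: "minkowski_gauge U p \<le> tanh (\<rho> + d)" by (simp add: PhiImage_gauge)
  define g where "g = minkowski_gauge U p"
  have g: "0 \<le> g" "g < 1" using gauge_nonneg g_le tanh_real_lt_1[of "\<rho> + d"] by (auto simp: g_def)
  hence p: "p \<in> U" using gauge_less_1 by (simp add: g_def)
  have "artanh g \<le> \<rho> + d" using artanh_le_iff g g_le by (simp add: g_def)
  moreover have "ln ((1 + minkowski_gauge U (- p)) / (1 + g)) \<le> ln (1/2 * (1 + c))"
    using g gauge_nonneg gauge_neg_le[OF c_bound, of p] asymmetry_bound_ge_1[OF c_bound]
    by (intro asymmetry_excess_upper) (auto simp: g_def)
  ultimately have "hilbert_dist U 0 p \<le> \<rho>" using hilbert_dist_origin[OF p] d by (simp add: g_def)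
  thus "p \<in> hball U \<rho>" using p by (simp add: hball_def)
qed

end

text \<open>Pairs (p, v) with F_U(p, v) < 1, written without exit parameters so that the set is
  visibly open in the product space.\<close>
definition finsler_unit_bundle :: "'a::euclidean_space set \<Rightarrow> ('a \<times> 'a) set" where
  "finsler_unit_bundle U =
     {(p, v). \<exists>\<alpha>>0. \<exists>\<beta>>0. p + \<alpha> *\<^sub>R v \<in> U \<and> p - \<beta> *\<^sub>R v \<in> U \<and> 1/\<alpha> + 1/\<beta> < 2}"

context convex_domain
begin

text \<open>The bundle is a union of intersections of preimages of U under continuous maps.\<close>
lemma finsler_unit_bundle_open: "open (finsler_unit_bundle U)"
proof -
  have "finsler_unit_bundle U = (\<Union>\<alpha>\<in>{0<..}. \<Union>\<beta>\<in>{\<beta>. \<beta> > 0 \<and> 1/\<alpha> + 1/\<beta> < 2}.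
      ((\<lambda>z. fst z + \<alpha> *\<^sub>R snd z) -` U) \<inter> ((\<lambda>z. fst z - \<beta> *\<^sub>R snd z) -` U))"
    by (auto simp: finsler_unit_bundle_def) (meson greaterThan_iff, meson)
  moreover have "open \<dots>"
    by (intro open_UN ballI open_Int continuous_open_vimage domain_open continuous_intros)
  ultimately show ?thesis by simp
qed

lemma finsler_unit_bundle_section_open: "open (Pair p -` finsler_unit_bundle U)"
  by (intro continuous_open_vimage finsler_unit_bundle_open continuous_intros)

lemma finsler_U_exit:
  assumes p: "p \<in> U" and v: "v \<noteq> 0"
  shows "finsler_U U p v = (1 / exit_param U p v + 1 / exit_param U p (- v)) / 2"
proof -
  have "- v \<noteq> 0" using v by simp
  note a = exit_param(1)[OF p v] and b = exit_param(1)[OF p this]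
  have "norm (p - bdry_point U p v) = exit_param U p v * norm v"
    "norm (p - bdry_point U p (- v)) = exit_param U p (- v) * norm v"
    using a b by (simp_all add: bdry_point_def)
  thus ?thesis using v a b by (simp add: finsler_U_def field_simps)
qed

lemma finsler_unit_bundle_section:
  assumes p: "p \<in> U"
  shows "Pair p -` finsler_unit_bundle U = {v. finsler_U U p v < 1}"
proof (intro set_eqI)
  fix v :: 'a
  show "v \<in> Pair p -` finsler_unit_bundle U \<longleftrightarrow> v \<in> {v. finsler_U U p v < 1}"
  proof (cases "v = 0")
    case True
    thus ?thesis using p by (auto simp: finsler_unit_bundle_def finsler_U_def intro!: exI[of _ 2])
  next
    case False
    hence "- v \<noteq> 0" by simp
    define a b where "a = exit_param U p v" and "b = exit_param U p (- v)"
    have ab: "a > 0" "b > 0" using exit_param(1)[OF p] False \<open>- v \<noteq> 0\<close> by (auto simp: a_def b_def)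
    have "\<And>s. s > 0 \<Longrightarrow> p + s *\<^sub>R v \<in> U \<longleftrightarrow> s < a" "\<And>s. s > 0 \<Longrightarrow> p - s *\<^sub>R v \<in> U \<longleftrightarrow> s < b"
      using exit_param(2)[OF p False] exit_param(2)[OF p \<open>- v \<noteq> 0\<close>] by (auto simp: a_def b_def)
    hence "v \<in> Pair p -` finsler_unit_bundle U
        \<longleftrightarrow> (\<exists>\<alpha>>0. \<exists>\<beta>>0. \<alpha> < a \<and> \<beta> < b \<and> 1/\<alpha> + 1/\<beta> < 2)"
      unfolding finsler_unit_bundle_def by auto
    also have "\<dots> \<longleftrightarrow> 1/a + 1/b < 2" using reciprocal_sum_below_iff[OF ab] .
    also have "\<dots> \<longleftrightarrow> finsler_U U p v < 1"
      unfolding finsler_U_exit[OF p False] a_def[symmetric] b_def[symmetric] by auto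
    finally show ?thesis by simp
  qed
qed

text \<open>A vector of Finsler norm less than one points into U from p in one of its two
  directions, so the Finsler unit ball at p is bounded.\<close>
lemma finsler_unit_bundle_section_bounded:
  assumes p: "p \<in> U"
  shows "bounded (Pair p -` finsler_unit_bundle U)"
proof -
  obtain B where B: "\<forall>x\<in>U. norm x \<le> B" using domain_bounded bounded_iff by auto
  have shrink: "p + w \<in> U" if "p + \<gamma> *\<^sub>R w \<in> U" "\<gamma> \<ge> 1" for \<gamma> w
  proof -
    have "(1 - 1/\<gamma>) *\<^sub>R p + (1/\<gamma>) *\<^sub>R (p + \<gamma> *\<^sub>R w) \<in> U"
      using convexD[OF domain_convex p that(1)] that(2) by simp
    thus ?thesis using that(2) by (simp add: algebra_simps)
  qed
  have "norm v \<le> B + norm p" if v: "v \<in> Pair p -` finsler_unit_bundle U" for v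
  proof -
    obtain \<alpha> \<beta> where h: "\<alpha> > 0" "\<beta> > 0" "p + \<alpha> *\<^sub>R v \<in> U" "p - \<beta> *\<^sub>R v \<in> U"
      "1/\<alpha> + 1/\<beta> < 2"
      using v unfolding finsler_unit_bundle_def by blast
    have "\<alpha> \<ge> 1 \<or> \<beta> \<ge> 1"
    proof (rule ccontr)
      assume "\<not> ?thesis"
      hence "1 < 1/\<alpha>" "1 < 1/\<beta>" using h by (simp_all add: field_simps)
      thus False using h by linarith
    qed
    hence "p + v \<in> U \<or> p + (- v) \<in> U" using shrink[of \<alpha> v] shrink[of \<beta> "- v"] h by auto
    moreover have "norm v \<le> norm (p + v) + norm p" "norm v \<le> norm (p + (- v)) + norm p"
      by (metis add_diff_cancel_left' norm_triangle_ineq4 add.commute norm_minus_cancel)+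
    ultimately show ?thesis using B by fastforce
  qed
  thus ?thesis unfolding bounded_iff by blast
qed

lemma finsler_unit_ball_measure_measurable:
  "(\<lambda>p. measure lborel (Pair p -` finsler_unit_bundle U)) \<in> borel_measurable borel"
proof -
  have "finsler_unit_bundle U \<in> sets (lborel \<Otimes>\<^sub>M lborel)"
    unfolding lborel_prod using finsler_unit_bundle_open by simp
  from lborel.measurable_emeasure_Pair[OF this]
  show ?thesis unfolding measure_def by measurable
qed

lemma BH_density_eq:
  assumes p: "p \<in> U"
  shows "BH_density U p
           = measure lebesgue (ball (0::'a) 1) / measure lborel (Pair p -` finsler_unit_bundle U)"
proof -
  have "Pair p -` finsler_unit_bundle U \<in> sets lborel"
    using finsler_unit_bundle_section_open by simp
  thus ?thesis unfolding BH_density_def finsler_unit_bundle_section[OF p, symmetric] by simp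
qed

text \<open>If the Euclidean e-ball about p lies in U, the Finsler unit ball at p contains the
  Euclidean (e/2)-ball, which bounds the Busemann--Hausdorff density from above.\<close>
lemma finsler_unit_ball_measure_lower:
  assumes p: "p \<in> U" and near: "\<And>w. norm w < e \<Longrightarrow> p + w \<in> U"
  shows "measure lebesgue (ball (0::'a) (e/2)) \<le> measure lborel (Pair p -` finsler_unit_bundle U)"
proof -
  have "ball 0 (e/2) \<subseteq> Pair p -` finsler_unit_bundle U"
  proof
    fix v :: 'a assume "v \<in> ball 0 (e/2)"
    hence "norm (2 *\<^sub>R v) < e" "norm (- (2 *\<^sub>R v)) < e" by simp_all
    hence "p + 2 *\<^sub>R v \<in> U" "p - 2 *\<^sub>R v \<in> U" using near[of "2 *\<^sub>R v"] near[of "- (2 *\<^sub>R v)"] by simp_all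
    thus "v \<in> Pair p -` finsler_unit_bundle U"
      unfolding finsler_unit_bundle_def by (auto intro!: exI[of _ 2])
  qed
  moreover have "Pair p -` finsler_unit_bundle U \<in> fmeasurable lborel"
    using finsler_unit_bundle_section_open finsler_unit_bundle_section_bounded[OF p]
      emeasure_bounded_finite
    by (intro fmeasurableI) auto
  ultimately have "measure lborel (ball (0::'a) (e/2)) \<le> measure lborel (Pair p -` finsler_unit_bundle U)"
    by (intro measure_mono_fmeasurable) auto
  thus ?thesis by simp
qed

end

context convex_domain_origin
begin

text \<open>Points of a gauge sublevel set below level T < 1 keep a uniform Euclidean distance
  to the boundary: a convex combination of a point of U and a point of a ball about 0.\<close>
lemma gauge_sublevel_margin:
  assumes \<delta>: "ball 0 \<delta> \<subseteq> U" and T: "0 < T" "T < 1"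
    and p: "minkowski_gauge U p < T" and w: "norm w < (1 - T) * \<delta>"
  shows "p + w \<in> U"
proof -
  have "(1 / T) *\<^sub>R p \<in> U" using p gauge_less_iff[OF T(1)] by simp
  moreover have "(1 / (1 - T)) *\<^sub>R w \<in> U" using \<delta> w T by (auto simp: field_simps)
  ultimately have "T *\<^sub>R ((1 / T) *\<^sub>R p) + (1 - T) *\<^sub>R ((1 / (1 - T)) *\<^sub>R w) \<in> U"
    using T by (intro convexD[OF domain_convex]) auto
  thus ?thesis using T by simp
qed

lemma gauge_sublevel_measurable: "{p. minkowski_gauge U p \<le> T} \<in> sets lebesgue"
proof -
  note [measurable] = gauge_measurable
  have "{p. minkowski_gauge U p \<le> T} \<in> sets borel" by measurable
  thus ?thesis by simp
qed

text \<open>The Busemann--Hausdorff density is bounded, hence integrable, on every gauge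
  sublevel set strictly inside U.\<close>
lemma BH_density_integrable:
  assumes T: "T < 1"
  shows "set_integrable lebesgue {p. minkowski_gauge U p \<le> T} (BH_density U)"
proof -
  define K where "K = {p. minkowski_gauge U p \<le> T}"
  define T' where "T' = (1 + max T 0) / 2"
  have T': "0 < T'" "T' < 1" "T < T'" using T by (auto simp: T'_def)
  have KU: "K \<subseteq> U" using T by (auto simp: K_def gauge_less_1)
  obtain \<delta> where \<delta>: "\<delta> > 0" "ball 0 \<delta> \<subseteq> U"
    using domain_open origin_in_domain open_contains_ball by blast
  define e where "e = (1 - T') * \<delta>"
  define C0 where "C0 = measure lebesgue (ball (0::'a) 1)"
  define L where "L = measure lebesgue (ball (0::'a) (e / 2))"
  define f where "f = (\<lambda>p. C0 / measure lborel (Pair p -` finsler_unit_bundle U))"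
  have L: "L > 0" using T' \<delta> by (simp add: L_def e_def)
  have f_meas: "f \<in> borel_measurable lebesgue"
    unfolding f_def using finsler_unit_ball_measure_measurable
    by (intro measurable_completion borel_measurable_divide borel_measurable_const) simp
  have f_bound: "norm (f p) \<le> C0 / L" if "p \<in> K" for p
  proof -
    have "minkowski_gauge U p < T'" using that T' by (simp add: K_def)
    hence "\<And>w. norm w < e \<Longrightarrow> p + w \<in> U"
      using gauge_sublevel_margin[OF \<delta>(2) T'(1,2)] by (simp add: e_def)
    hence "L \<le> measure lborel (Pair p -` finsler_unit_bundle U)"
      unfolding L_def using finsler_unit_ball_measure_lower that KU by blast
    thus ?thesis using L by (simp add: f_def C0_def frac_le)
  qed
  have K_meas: "K \<in> sets lebesgue" using gauge_sublevel_measurable by (simp add: K_def)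
  have "bounded K" using KU domain_bounded bounded_subset by blast
  hence "K \<in> lmeasurable" using K_meas by (rule bounded_set_imp_lmeasurable)
  hence "emeasure lebesgue K < \<infinity>" unfolding fmeasurable_def by blast
  hence "integrable lebesgue (\<lambda>x. indicator K x *\<^sub>R f x)"
    using K_meas f_meas f_bound
    by (intro integrableI_bounded_set_indicator[where B = "C0 / L"] AE_I2) auto
  moreover have "(\<lambda>x. indicator K x *\<^sub>R f x) = (\<lambda>x. indicator K x *\<^sub>R BH_density U x)"
  proof
    fix x
    show "indicator K x *\<^sub>R f x = indicator K x *\<^sub>R BH_density U x"
      using BH_density_eq[of x] KU by (cases "x \<in> K") (auto simp: f_def C0_def)
  qed
  ultimately have "integrable lebesgue (\<lambda>x. indicator K x *\<^sub>R BH_density U x)"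
    by (simp only:)
  thus ?thesis unfolding set_integrable_def K_def .
qed

lemma BH_vol_mono:
  assumes A: "A \<in> sets lebesgue" and B: "B \<in> sets lebesgue" and AB: "A \<subseteq> B"
    and BT: "B \<subseteq> {p. minkowski_gauge U p \<le> T}" and T: "T < 1"
  shows "BH_vol U A \<le> BH_vol U B"
proof -
  have int_B: "set_integrable lebesgue B (BH_density U)"
    using set_integrable_subset[OF BH_density_integrable[OF T] B BT] .
  have int_A: "set_integrable lebesgue A (BH_density U)"
    using set_integrable_subset[OF int_B A AB] .
  have "indicator A x *\<^sub>R BH_density U x \<le> indicator B x *\<^sub>R BH_density U x" for x
    using AB by (auto simp: indicator_def BH_density_def)
  with int_A int_B show ?thesis
    unfolding BH_vol_def set_lebesgue_integral_def set_integrable_def by (rule integral_mono)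
qed

end

theorem mainTheorem5:
  fixes U :: "'a::euclidean_space set"
  assumes "DIM('a) \<ge> 2"
    and "bounded U" and "open U" and "convex U" and "(0::'a) \<in> U"
    and "C3_pos_curv_boundary U"
  defines "c \<equiv> Sup ((\<lambda>u. radial U u / radial U (- u)) ` sphere (0::'a) 1)"
  defines "d1 \<equiv> - 1/2 * ln (1/2 * (1 + 1 / c))"
  defines "d2 \<equiv> - 1/2 * ln (1/2 * (1 + c))"
  shows "(\<forall>d \<ge> d1. \<exists>\<rho>0. \<forall>\<rho> \<ge> \<rho>0. hball U \<rho> \<subseteq> PhiImage U (\<rho> + d))
       \<and> (\<forall>d \<le> d2. \<exists>\<rho>0. \<forall>\<rho> \<ge> \<rho>0. PhiImage U (\<rho> + d) \<subseteq> hball U \<rho>)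
       \<and> (\<exists>\<rho>0. \<forall>\<rho> \<ge> \<rho>0. BH_vol U (PhiImage U (\<rho> + d2)) \<le> BH_vol U (hball U \<rho>)
                          \<and> BH_vol U (hball U \<rho>) \<le> BH_vol U (PhiImage U (\<rho> + d1)))
       \<and> ((\<forall>x. x \<in> U \<longleftrightarrow> - x \<in> U) \<longrightarrow> d1 = 0 \<and> d2 = 0)"
proof -
  interpret convex_domain_origin U using assms(2-5) by unfold_locales
  have c_bound: "\<forall>u\<in>sphere 0 1. radial U u / radial U (- u) \<le> c"
    unfolding c_def using radial_ratio_bdd_above by (auto intro: cSup_upper)
  have outer: "hball U \<rho> \<subseteq> PhiImage U (\<rho> + d)" if "d \<ge> d1" for \<rho> d
    using hball_subset_PhiImage[OF c_bound] that by (simp add: d1_def)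
  have inner: "PhiImage U (\<rho> + d) \<subseteq> hball U \<rho>" if "d \<le> d2" for \<rho> d
    using PhiImage_subset_hball[OF c_bound] that by (simp add: d2_def)
  have volume: "BH_vol U (PhiImage U (\<rho> + d2)) \<le> BH_vol U (hball U \<rho>)
      \<and> BH_vol U (hball U \<rho>) \<le> BH_vol U (PhiImage U (\<rho> + d1))" for \<rho>
  proof -
    have "PhiImage U (\<rho> + d1) \<subseteq> {p. minkowski_gauge U p \<le> tanh (\<rho> + d1)}"
      by (simp add: PhiImage_gauge)
    thus ?thesis
      using outer[OF order_refl, of \<rho>] inner[OF order_refl, of \<rho>] tanh_real_lt_1
      by (intro conjI BH_vol_mono PhiImage_measurable hball_measurable) auto
  qed
  have symmetric: "c = 1" if sym: "\<forall>x. x \<in> U \<longleftrightarrow> - x \<in> U"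
  proof -
    obtain b :: 'a where "b \<in> Basis" using nonempty_Basis by blast
    hence "b \<in> sphere 0 1" by simp
    have "(\<lambda>u. radial U u / radial U (- u)) ` sphere 0 1 = (\<lambda>u. 1) ` sphere (0::'a) 1"
    proof (rule image_cong)
      fix u :: 'a assume "u \<in> sphere 0 1"
      hence "u \<noteq> 0" by auto
      thus "radial U u / radial U (- u) = 1" by (rule radial_ratio_symmetric[OF sym])
    qed simp
    also have "\<dots> = {1}" using \<open>b \<in> sphere 0 1\<close> by auto
    finally show ?thesis by (simp add: c_def)
  qed
  show ?thesis using outer inner volume symmetric by (auto simp: d1_def d2_def)
qed

end
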